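(* Consider a multivariate exponential family of pdfs or pmfs $$f(\boldsymbol{x},\boldsymbol{\theta})=v(\boldsymbol{x})\exp\big(\boldsymbol{\eta}(\boldsymbol{\theta})*\boldsymbol{u}(\boldsymbol{x})-\zeta(\boldsymbol{\theta})\big),\qquad\boldsymbol{\theta}\in\Theta,$$ where $\boldsymbol{x},\boldsymbol{\theta}$ are column vectors, $\boldsymbol{\eta}(\boldsymbol{\theta})$ and $\boldsymbol{u}(\boldsymbol{x})$ are column-vector functions, $\zeta(\boldsymbol{\theta})$ and $v(\boldsymbol{x})$ are scalar functions, $*$ denotes the inner product, and $\boldsymbol{\eta},\zeta$ are differentiable in $\boldsymbol{\theta}$. Let $\boldsymbol{X}_1,\dots,\boldsymbol{X}_n$ be i.i.d. random vectors with common pdf or pmf $f(\cdot,\boldsymbol{\theta})$, and let $\boldsymbol{Z}=\frac1n\sum_{i=1}^n\boldsymbol{u}(\boldsymbol{X}_i)$. For $\boldsymbol{\theta},\boldsymbol{\vartheta}\in\Theta$ and a vector $\boldsymbol{z}$ of the same size as $\boldsymbol{Z}$ define $\rho(\boldsymbol{z},\boldsymbol{\vartheta})=[\boldsymbol{\eta}(\boldsymbol{\theta})-\boldsymbol{\eta}(\boldsymbol{\vartheta})]*\boldsymbol{z}-\zeta(\boldsymbol{\theta})+\zeta(\boldsymbol{\vartheta})$, and let $\mathscr{A}_{\boldsymbol{\theta}}=\{\boldsymbol{\vartheta}\in\Theta:\boldsymbol{\eta}(\boldsymbol{\vartheta})\le\boldsymbol{\eta}(\boldsymbol{\theta})\}$,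 $\mathscr{B}_{\boldsymbol{\theta}}=\{\boldsymbol{\vartheta}\in\Theta:\boldsymbol{\eta}(\boldsymbol{\vartheta})\ge\boldsymbol{\eta}(\boldsymbol{\theta})\}$. Then $$\Pr\{\boldsymbol{Z}\le\boldsymbol{z}\mid\boldsymbol{\theta}\}\le\inf_{\boldsymbol{\vartheta}\in\mathscr{A}_{\boldsymbol{\theta}}}\exp(n\rho(\boldsymbol{z},\boldsymbol{\vartheta}))\Pr\{\boldsymbol{Z}\le\boldsymbol{z}\mid\boldsymbol{\vartheta}\}\le\inf_{\boldsymbol{\vartheta}\in\mathscr{A}_{\boldsymbol{\theta}}}\exp(n\rho(\boldsymbol{z},\boldsymbol{\vartheta})),$$ $$\Pr\{\boldsymbol{Z}\ge\boldsymbol{z}\mid\boldsymbol{\theta}\}\le\inf_{\boldsymbol{\vartheta}\in\mathscr{B}_{\boldsymbol{\theta}}}\exp(n\rho(\boldsymbol{z},\boldsymbol{\vartheta}))\Pr\{\boldsymbol{Z}\ge\boldsymbol{z}\mid\boldsymbol{\vartheta}\}\le\inf_{\boldsymbol{\vartheta}\in\mathscr{B}_{\boldsymbol{\theta}}}\exp(n\rho(\boldsymbol{z},\boldsymbol{\vartheta})).$$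
   Context: $\Pr\{E\mid\boldsymbol{\theta}\}$ denotes the probability of the event $E$ when the $\boldsymbol{X}_i$ are i.i.d. with pdf or pmf $f(\cdot,\boldsymbol{\theta})$. For vectors, $\boldsymbol{V}_1\le\boldsymbol{V}_2$ (resp. $\ge$) means componentwise inequality. *)

theory Defs
  imports "HOL-Probability.Probability"
begin

text \<open>Exponential family density/mass function
  f(x,theta) = v(x) exp(eta(theta) * u(x) - zeta(theta)) with respect to a base measure M
  (Lebesgue measure for a pdf, counting measure for a pmf).\<close>
definition expfam :: "('p \<Rightarrow> real^'k) \<Rightarrow> ('p \<Rightarrow> real) \<Rightarrow> ('x \<Rightarrow> real^'k) \<Rightarrow> ('x \<Rightarrow> real)
    \<Rightarrow> 'x \<Rightarrow> 'p \<Rightarrow> real" where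
  "expfam \<eta> \<zeta> u v x \<theta> = v x * exp (inner (\<eta> \<theta>) (u x) - \<zeta> \<theta>)"

definition sample_law :: "'x measure \<Rightarrow> ('x \<Rightarrow> 'p \<Rightarrow> real) \<Rightarrow> nat \<Rightarrow> 'p \<Rightarrow> (nat \<Rightarrow> 'x) measure" where
  "sample_law M f n \<theta> = PiM {..<n} (\<lambda>_. density M (\<lambda>x. ennreal (f x \<theta>)))"

definition sample_mean :: "nat \<Rightarrow> ('x \<Rightarrow> real^'k) \<Rightarrow> (nat \<Rightarrow> 'x) \<Rightarrow> real^'k" where
  "sample_mean n u xs = (1 / real n) *\<^sub>R (\<Sum>i<n. u (xs i))"

definition rho :: "('p \<Rightarrow> real^'k) \<Rightarrow> ('p \<Rightarrow> real) \<Rightarrow> 'p \<Rightarrow> real^'k \<Rightarrow> 'p \<Rightarrow> real" where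
  "rho \<eta> \<zeta> \<theta> z \<theta>' = inner (\<eta> \<theta> - \<eta> \<theta>') z - \<zeta> \<theta> + \<zeta> \<theta>'"

end

theory Submission
  imports Defs
begin

text \<open>Exponential tilting: the likelihood ratio of the sample under \<open>\<theta>\<close> against \<open>\<vartheta>\<close> is
  \<open>exp (n \<rho>(Z, \<vartheta>))\<close>, where \<open>Z\<close> is the sample mean. On \<open>{Z \<le> z}\<close> with \<open>\<eta> \<vartheta> \<le> \<eta> \<theta>\<close>
  (or on \<open>{Z \<ge> z}\<close> with \<open>\<eta> \<vartheta> \<ge> \<eta> \<theta>\<close>) this ratio is at most \<open>exp (n \<rho>(z, \<vartheta>))\<close>, so
  integrating it against the law under \<open>\<vartheta>\<close> bounds the probability under \<open>\<theta>\<close>.\<close>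

lemma indicator_PiE_prod:
  fixes g :: "'a \<Rightarrow> ennreal"
  assumes "finite I" and "x \<in> extensional I"
  shows "(\<Prod>i\<in>I. g (x i)) * indicator (Pi\<^sub>E I A) x = (\<Prod>i\<in>I. g (x i) * indicator (A i) (x i))"
proof -
  have "indicator (Pi\<^sub>E I A) x = (\<Prod>i\<in>I. indicator (A i) (x i) :: ennreal)"
  proof (cases "\<forall>i\<in>I. x i \<in> A i")
    case True
    then show ?thesis using assms(2) by (simp add: PiE_def)
  next
    case False
    then obtain i where "i \<in> I" "x i \<notin> A i" by blast
    then have "(\<Prod>i\<in>I. indicator (A i) (x i) :: ennreal) = 0"
      using assms(1) by (intro prod_zero bexI[of _ i]) auto
    moreover have "x \<notin> Pi\<^sub>E I A" using False by (auto simp: PiE_def)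
    ultimately show ?thesis by simp
  qed
  then show ?thesis by (simp add: prod.distrib)
qed

lemma PiM_density_eq_density_PiM:
  fixes g :: "'a \<Rightarrow> ennreal"
  assumes "prob_space N" and "prob_space (density N g)"
    and g: "g \<in> borel_measurable N" and I: "finite I"
  shows "PiM I (\<lambda>_. density N g) = density (PiM I (\<lambda>_. N)) (\<lambda>x. \<Prod>i\<in>I. g (x i))"
proof -
  interpret N: product_sigma_finite "\<lambda>_. N"
    unfolding product_sigma_finite_def using assms(1) prob_space_imp_sigma_finite by blast
  interpret D: product_sigma_finite "\<lambda>_. density N g"
    unfolding product_sigma_finite_def using assms(2) prob_space_imp_sigma_finite by blast
  show ?thesis
  proof (rule D.PiM_eqI[OF I, symmetric])
    show "sets (density (PiM I (\<lambda>_. N)) (\<lambda>x. \<Prod>i\<in>I. g (x i))) = sets (PiM I (\<lambda>_. density N g))"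
      unfolding sets_density by (rule sets_PiM_cong[OF refl]) simp
  next
    fix A assume "\<And>i. i \<in> I \<Longrightarrow> A i \<in> sets (density N g)"
    then have A: "\<And>i. i \<in> I \<Longrightarrow> A i \<in> sets N" by simp
    have "emeasure (density (PiM I (\<lambda>_. N)) (\<lambda>x. \<Prod>i\<in>I. g (x i))) (Pi\<^sub>E I A)
        = (\<integral>\<^sup>+ x. (\<Prod>i\<in>I. g (x i)) * indicator (Pi\<^sub>E I A) x \<partial>PiM I (\<lambda>_. N))"
      using A I g by (subst emeasure_density) (auto intro!: sets_PiM_I_finite)
    also have "\<dots> = (\<integral>\<^sup>+ x. (\<Prod>i\<in>I. g (x i) * indicator (A i) (x i)) \<partial>PiM I (\<lambda>_. N))"
      using I by (intro nn_integral_cong indicator_PiE_prod) (auto simp: space_PiM PiE_def)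
    also have "\<dots> = (\<Prod>i\<in>I. \<integral>\<^sup>+ y. g y * indicator (A i) y \<partial>N)"
      using A g I by (subst N.product_nn_integral_prod) auto
    also have "\<dots> = (\<Prod>i\<in>I. emeasure (density N g) (A i))"
      using A g by (intro prod.cong) (auto simp: emeasure_density)
    finally show "emeasure (density (PiM I (\<lambda>_. N)) (\<lambda>x. \<Prod>i\<in>I. g (x i))) (Pi\<^sub>E I A)
        = (\<Prod>i\<in>I. emeasure (density N g) (A i))" .
  qed
qed

text \<open>No measurability of \<open>E\<close> is needed: otherwise both sides are \<open>0\<close>.\<close>

lemma measure_density_le_of_bounded_on:
  assumes "finite_measure N" and G: "G \<in> borel_measurable N"
    and bound: "\<And>x. x \<in> E \<Longrightarrow> G x \<le> ennreal c" and "0 \<le> c"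
  shows "measure (density N G) E \<le> c * measure N E"
proof (cases "E \<in> sets N")
  case False
  then show ?thesis by (simp add: measure_notin_sets)
next
  case E: True
  interpret finite_measure N by (rule assms(1))
  have "emeasure (density N G) E = (\<integral>\<^sup>+ x. G x * indicator E x \<partial>N)"
    using E G by (simp add: emeasure_density)
  also have "\<dots> \<le> (\<integral>\<^sup>+ x. ennreal c * indicator E x \<partial>N)"
    using bound by (intro nn_integral_mono) (auto simp: indicator_def)
  also have "\<dots> = ennreal (c * measure N E)"
    using E \<open>0 \<le> c\<close> by (simp add: nn_integral_cmult_indicator emeasure_eq_measure ennreal_mult)
  finally have "emeasure (density N G) E \<le> ennreal (c * measure N E)" .
  then show ?thesis
    unfolding measure_def[of "density N G"] using \<open>0 \<le> c\<close> by (intro enn2real_leI) auto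
qed

lemma expfam_borel_measurable:
  assumes "v \<in> borel_measurable M" and "u \<in> borel_measurable M"
  shows "(\<lambda>x. ennreal (expfam \<eta> \<zeta> u v x t)) \<in> borel_measurable M"
  unfolding expfam_def using assms by measurable

lemma prob_space_expfam_density:
  assumes "v \<in> borel_measurable M" and "u \<in> borel_measurable M"
    and "(\<integral>\<^sup>+ x. ennreal (expfam \<eta> \<zeta> u v x t) \<partial>M) = 1"
  shows "prob_space (density M (\<lambda>x. ennreal (expfam \<eta> \<zeta> u v x t)))"
    (is "prob_space (density M ?f)")
proof (rule prob_spaceI)
  have "emeasure (density M ?f) (space M) = (\<integral>\<^sup>+ x. ?f x * indicator (space M) x \<partial>M)"
    using expfam_borel_measurable[OF assms(1,2)] by (intro emeasure_density) auto
  also have "\<dots> = 1"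
    using assms(3) by (subst nn_integral_cong[where v = ?f]) auto
  finally show "emeasure (density M ?f) (space (density M ?f)) = 1" by simp
qed

lemma prob_space_sample_law_expfam:
  assumes "v \<in> borel_measurable M" and "u \<in> borel_measurable M"
    and "(\<integral>\<^sup>+ x. ennreal (expfam \<eta> \<zeta> u v x t) \<partial>M) = 1"
  shows "prob_space (sample_law M (expfam \<eta> \<zeta> u v) n t)"
  unfolding sample_law_def by (intro prob_space_PiM prob_space_expfam_density[OF assms])

lemma expfam_tilt:
  assumes "v x \<ge> 0"
  shows "ennreal (expfam \<eta> \<zeta> u v x t)
       = ennreal (expfam \<eta> \<zeta> u v x t') * ennreal (exp (inner (\<eta> t - \<eta> t') (u x) - \<zeta> t + \<zeta> t'))"
proof -
  have "expfam \<eta> \<zeta> u v x t = expfam \<eta> \<zeta> u v x t' * exp (inner (\<eta> t - \<eta> t') (u x) - \<zeta> t + \<zeta> t')"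
    unfolding expfam_def by (simp add: mult.assoc exp_add[symmetric] inner_diff_left algebra_simps)
  moreover have "expfam \<eta> \<zeta> u v x t' \<ge> 0"
    unfolding expfam_def using assms by simp
  ultimately show ?thesis by (simp add: ennreal_mult)
qed

lemma sample_law_expfam_eq_density:
  assumes v_nonneg: "\<And>x. v x \<ge> 0"
    and v_meas: "v \<in> borel_measurable M" and u_meas: "u \<in> borel_measurable M"
    and norm_t: "(\<integral>\<^sup>+ x. ennreal (expfam \<eta> \<zeta> u v x t) \<partial>M) = 1"
    and norm_t': "(\<integral>\<^sup>+ x. ennreal (expfam \<eta> \<zeta> u v x t') \<partial>M) = 1"
  shows "sample_law M (expfam \<eta> \<zeta> u v) n t
       = density (sample_law M (expfam \<eta> \<zeta> u v) n t')
           (\<lambda>xs. \<Prod>i<n. ennreal (exp (inner (\<eta> t - \<eta> t') (u (xs i)) - \<zeta> t + \<zeta> t')))"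
proof -
  define N where "N = density M (\<lambda>x. ennreal (expfam \<eta> \<zeta> u v x t'))"
  define g where "g x = ennreal (exp (inner (\<eta> t - \<eta> t') (u x) - \<zeta> t + \<zeta> t'))" for x
  have g: "g \<in> borel_measurable M"
    unfolding g_def using u_meas by measurable
  have "(\<lambda>x. ennreal (expfam \<eta> \<zeta> u v x t') * g x) = (\<lambda>x. ennreal (expfam \<eta> \<zeta> u v x t))"
    unfolding g_def by (simp add: expfam_tilt[where t = t and t' = t'] v_nonneg)
  then have tilted: "density N g = density M (\<lambda>x. ennreal (expfam \<eta> \<zeta> u v x t))"
    unfolding N_def by (simp add: density_density_eq[OF expfam_borel_measurable[OF v_meas u_meas] g])
  have "PiM {..<n} (\<lambda>_. density N g) = density (PiM {..<n} (\<lambda>_. N)) (\<lambda>xs. \<Prod>i<n. g (xs i))"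
  proof (rule PiM_density_eq_density_PiM)
    show "prob_space N"
      unfolding N_def by (rule prob_space_expfam_density[OF v_meas u_meas norm_t'])
    show "prob_space (density N g)"
      unfolding tilted by (rule prob_space_expfam_density[OF v_meas u_meas norm_t])
  qed (use g N_def in simp_all)
  then show ?thesis
    unfolding tilted unfolding sample_law_def N_def g_def .
qed

lemma prod_tilt_eq_exp_rho:
  assumes "n \<ge> 1"
  shows "(\<Prod>i<n. exp (inner (\<eta> t - \<eta> t') (u (xs i)) - \<zeta> t + \<zeta> t'))
       = exp (real n * rho \<eta> \<zeta> t (sample_mean n u xs) t')"
  using assms unfolding rho_def sample_mean_def
  by (simp add: exp_sum[symmetric] sum_subtractf sum.distrib inner_sum_right algebra_simps)

lemma rho_mono_le:
  fixes Z z :: "real^'k"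
  assumes "\<eta> t' \<le> \<eta> t" and "Z \<le> z"
  shows "rho \<eta> \<zeta> t Z t' \<le> rho \<eta> \<zeta> t z t'"
  using assms unfolding rho_def inner_vec_def less_eq_vec_def
  by (auto intro!: sum_mono mult_left_mono)

lemma rho_mono_ge:
  fixes Z z :: "real^'k"
  assumes "\<eta> t \<le> \<eta> t'" and "z \<le> Z"
  shows "rho \<eta> \<zeta> t Z t' \<le> rho \<eta> \<zeta> t z t'"
  using assms unfolding rho_def inner_vec_def less_eq_vec_def
  by (auto intro!: sum_mono mult_left_mono_neg)

lemma sample_event_prob_le_tilted:
  assumes "n \<ge> 1" and "\<And>x. v x \<ge> 0"
    and v_meas: "v \<in> borel_measurable M" and u_meas: "u \<in> borel_measurable M"
    and norm_t: "(\<integral>\<^sup>+ x. ennreal (expfam \<eta> \<zeta> u v x t) \<partial>M) = 1"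
    and norm_t': "(\<integral>\<^sup>+ x. ennreal (expfam \<eta> \<zeta> u v x t') \<partial>M) = 1"
    and S: "\<And>Z. S Z \<Longrightarrow> rho \<eta> \<zeta> t Z t' \<le> rho \<eta> \<zeta> t z t'"
  shows "measure (sample_law M (expfam \<eta> \<zeta> u v) n t)
                 {xs \<in> space (sample_law M (expfam \<eta> \<zeta> u v) n t). S (sample_mean n u xs)}
     \<le> exp (real n * rho \<eta> \<zeta> t z t') * measure (sample_law M (expfam \<eta> \<zeta> u v) n t')
                 {xs \<in> space (sample_law M (expfam \<eta> \<zeta> u v) n t'). S (sample_mean n u xs)}"
proof -
  define L' where "L' = sample_law M (expfam \<eta> \<zeta> u v) n t'"
  define E where "E = {xs \<in> space L'. S (sample_mean n u xs)}"
  have law: "sample_law M (expfam \<eta> \<zeta> u v) n t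
      = density L' (\<lambda>xs. ennreal (exp (real n * rho \<eta> \<zeta> t (sample_mean n u xs) t')))"
    unfolding L'_def sample_law_expfam_eq_density[OF assms(2-6)]
    by (simp add: prod_ennreal prod_tilt_eq_exp_rho[OF assms(1)])
  have "measure (density L' (\<lambda>xs. ennreal (exp (real n * rho \<eta> \<zeta> t (sample_mean n u xs) t')))) E
      \<le> exp (real n * rho \<eta> \<zeta> t z t') * measure L' E"
  proof (rule measure_density_le_of_bounded_on)
    show "finite_measure L'"
      unfolding L'_def using prob_space_sample_law_expfam[OF v_meas u_meas norm_t']
      by (rule prob_space.finite_measure)
    show "(\<lambda>xs. ennreal (exp (real n * rho \<eta> \<zeta> t (sample_mean n u xs) t'))) \<in> borel_measurable L'"
      unfolding L'_def sample_law_def sample_mean_def rho_def using u_meas by measurable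
  qed (use S in \<open>auto simp: E_def intro!: ennreal_leI mult_left_mono\<close>)
  then show ?thesis
    unfolding law L'_def[symmetric] by (simp add: E_def)
qed

lemma INF_mult_prob_bounds:
  fixes f p :: "'a \<Rightarrow> real"
  assumes "A \<noteq> {}" and lower: "\<And>t. t \<in> A \<Longrightarrow> a \<le> f t * p t"
    and "\<And>t. t \<in> A \<Longrightarrow> 0 \<le> f t" and "\<And>t. t \<in> A \<Longrightarrow> p t \<le> 1"
  shows "a \<le> (INF t\<in>A. f t * p t) \<and> (INF t\<in>A. f t * p t) \<le> (INF t\<in>A. f t)"
proof
  show "a \<le> (INF t\<in>A. f t * p t)"
    using assms(1) lower by (rule cINF_greatest)
  have "bdd_below ((\<lambda>t. f t * p t) ` A)"
    using lower by (auto intro!: bdd_belowI[where m = a])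
  then show "(INF t\<in>A. f t * p t) \<le> (INF t\<in>A. f t)"
    using assms(1,3,4) by (intro cINF_mono) (auto intro: mult_left_le)
qed

theorem theorem4:
  fixes M :: "(real^'m) measure"
    and \<Theta> :: "(real^'d) set"
    and \<eta> :: "real^'d \<Rightarrow> real^'k" and \<zeta> :: "real^'d \<Rightarrow> real"
    and u :: "real^'m \<Rightarrow> real^'k" and v :: "real^'m \<Rightarrow> real"
    and n :: nat and \<theta> :: "real^'d" and z :: "real^'k"
  assumes n: "n \<ge> 1"
    and v_nonneg: "\<And>x. v x \<ge> 0"
    and v_meas: "v \<in> borel_measurable M"
    and u_meas: "u \<in> borel_measurable M"
    and density: "\<And>\<theta>'. \<theta>' \<in> \<Theta> \<Longrightarrow> (\<integral>\<^sup>+ x. ennreal (expfam \<eta> \<zeta> u v x \<theta>') \<partial>M) = 1"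
    and \<eta>_diff: "\<eta> differentiable_on \<Theta>"
    and \<zeta>_diff: "\<zeta> differentiable_on \<Theta>"
    and \<theta>: "\<theta> \<in> \<Theta>"
  defines "P \<equiv> \<lambda>\<theta>' S. measure (sample_law M (expfam \<eta> \<zeta> u v) n \<theta>')
                 {xs \<in> space (sample_law M (expfam \<eta> \<zeta> u v) n \<theta>'). S (sample_mean n u xs)}"
    and "A \<equiv> {\<theta>' \<in> \<Theta>. \<eta> \<theta>' \<le> \<eta> \<theta>}"
    and "B \<equiv> {\<theta>' \<in> \<Theta>. \<eta> \<theta>' \<ge> \<eta> \<theta>}"
  shows "P \<theta> (\<lambda>Z. Z \<le> z)
           \<le> (INF \<theta>' \<in>A. exp (real n * rho \<eta> \<zeta> \<theta> z \<theta>') * P \<theta>' (\<lambda>Z. Z \<le> z))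
       \<and> (INF \<theta>' \<in>A. exp (real n * rho \<eta> \<zeta> \<theta> z \<theta>') * P \<theta>' (\<lambda>Z. Z \<le> z))
           \<le> (INF \<theta>' \<in>A. exp (real n * rho \<eta> \<zeta> \<theta> z \<theta>'))
       \<and> P \<theta> (\<lambda>Z. Z \<ge> z)
           \<le> (INF \<theta>' \<in>B. exp (real n * rho \<eta> \<zeta> \<theta> z \<theta>') * P \<theta>' (\<lambda>Z. Z \<ge> z))
       \<and> (INF \<theta>' \<in>B. exp (real n * rho \<eta> \<zeta> \<theta> z \<theta>') * P \<theta>' (\<lambda>Z. Z \<ge> z))
           \<le> (INF \<theta>' \<in>B. exp (real n * rho \<eta> \<zeta> \<theta> z \<theta>'))"
proof -
  have P_le_1: "P t S \<le> 1" if "t \<in> \<Theta>" for t S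
    unfolding P_def
    using prob_space_sample_law_expfam[OF v_meas u_meas density[OF that]] by (rule prob_space.prob_le_1)
  have tilted: "P \<theta> S \<le> exp (real n * rho \<eta> \<zeta> \<theta> z t) * P t S"
    if "t \<in> \<Theta>" and "\<And>Z. S Z \<Longrightarrow> rho \<eta> \<zeta> \<theta> Z t \<le> rho \<eta> \<zeta> \<theta> z t" for t S
    unfolding P_def
    by (rule sample_event_prob_le_tilted[OF n v_nonneg v_meas u_meas density[OF \<theta>] density[OF that(1)] that(2)])
  have "A \<noteq> {}" and "B \<noteq> {}"
    using \<theta> by (auto simp: A_def B_def)
  have "P \<theta> (\<lambda>Z. Z \<le> z)
           \<le> (INF \<theta>' \<in>A. exp (real n * rho \<eta> \<zeta> \<theta> z \<theta>') * P \<theta>' (\<lambda>Z. Z \<le> z))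
       \<and> (INF \<theta>' \<in>A. exp (real n * rho \<eta> \<zeta> \<theta> z \<theta>') * P \<theta>' (\<lambda>Z. Z \<le> z))
           \<le> (INF \<theta>' \<in>A. exp (real n * rho \<eta> \<zeta> \<theta> z \<theta>'))"
    using \<open>A \<noteq> {}\<close>
    by (rule INF_mult_prob_bounds) (auto simp: A_def intro!: tilted rho_mono_le P_le_1)
  moreover have "P \<theta> (\<lambda>Z. Z \<ge> z)
           \<le> (INF \<theta>' \<in>B. exp (real n * rho \<eta> \<zeta> \<theta> z \<theta>') * P \<theta>' (\<lambda>Z. Z \<ge> z))
       \<and> (INF \<theta>' \<in>B. exp (real n * rho \<eta> \<zeta> \<theta> z \<theta>') * P \<theta>' (\<lambda>Z. Z \<ge> z))
           \<le> (INF \<theta>' \<in>B. exp (real n * rho \<eta> \<zeta> \<theta> z \<theta>'))"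
    using \<open>B \<noteq> {}\<close>
    by (rule INF_mult_prob_bounds) (auto simp: B_def intro!: tilted rho_mono_ge P_le_1)
  ultimately show ?thesis by blast
qed

end
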